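(* For every $e\in\mathrm{Exp}$, $$e\equiv \mathrm{GS}_{\alpha\in\mathrm{At}}\Big(\bigoplus_{d\in\mathrm{supp}(\partial(e)_\alpha)}\partial(e)_\alpha(d)\cdot\exp(d)\Big),$$ where $\exp:\{\mathsf{acc},\mathsf{rej}\}+\mathrm{Out}+\mathrm{Act}\times\mathrm{Exp}\to\mathrm{Exp}$ is given by $\exp(\mathsf{rej})=\mathtt 0$, $\exp(\mathsf{acc})=\mathtt 1$, $\exp(v)=v$ for $v\in\mathrm{Out}$, and $\exp(p,f)=p;f$.
   Context: Fix a finite set $T$ of primitive tests, a set $\mathrm{Act}$ of atomic actions, a set $\mathrm{Out}$ of return values, and a semiring $(S,+,\cdot,0,1)$ that is positive ($x+y=0\Rightarrow x=y=0$), refinement (whenever $x+y=z+w$ there exist $s,t,u,v$ with $s+t=x$, $s+u=z$, $u+v=y$, $t+v=w$) and Conway (with ${}^*:S\to S$ satisfying $(a+b)^*=a^*(ba^* )^*$, $(ab)^*=1+a(ba)^*b$). Tests: $b,c\in\mathrm{BExp}::=\mathtt{0}\mid\mathtt{1}\mid t\ (t\in T)\mid\bar b\mid b+c\mid bc$ ($\mathtt 0,\mathtt 1$ false/true, distinct from semiring $0,1$); $\equiv_{BA}$ is Boolean equivalence; $\mathrm{At}$ is the finite set of atoms of the free Boolean algebra on $T$, atoms also regarded as tests; $\alpha\le b$ means $\alpha$ entails $b$. Expressions: $e,f\in\mathrm{Exp}::= p\in\mathrm{Act}\mid b\in\mathrm{BExp}\mid e+_b f\mid e;f\mid e^{(b)}\mid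 v\in\mathrm{Out}\mid e\oplus_{r,s} f\ (r,s\in S)$; $\odot r:=\mathtt 1\oplus_{r,0}\mathtt 0$. $\mathcal M_\omega(X)$: finitely supported maps $X\to S$, pointwise operations; $\delta_x$ indicator of $x$; $\mathrm{supp}(\nu)=\{x:\nu(x)\neq0\}$. The derivative $\partial:\mathrm{Exp}\to\mathcal M_\omega(\{\mathsf{acc},\mathsf{rej}\}+\mathrm{Out}+\mathrm{Act}\times\mathrm{Exp})^{\mathrm{At}}$: $\partial(b)_\alpha=\delta_{\mathsf{acc}}$ if $\alpha\le b$, else $\delta_{\mathsf{rej}}$; $\partial(v)_\alpha=\delta_v$; $\partial(p)_\alpha=\delta_{(p,\mathtt 1)}$; $\partial(e+_bf)_\alpha=\partial(e)_\alpha$ if $\alpha\le b$, else $\partial(f)_\alpha$; $\partial(e\oplus_{r,s}f)_\alpha=r\partial(e)_\alpha+s\partial(f)_\alpha$; $\partial(e;f)_\alpha=\sum_x\partial(e)_\alpha(x)c_{\alpha,f}(x)$ with $c_{\alpha,f}(\mathsf{acc})=\partial(f)_\alpha$, $c_{\alpha,f}(x)=\delta_x$ for $x\in\{\mathsf{rej}\}\cup\mathrm{Out}$, $c_{\alpha,f}(p,e')=\delta_{(p,e';f)}$; $\partial(e^{(b)})_\alpha(x)$ is $1$ if $x=\mathsf{acc}$ and $\alpha\le\bar b$; $\partial(e)_\alpha(\mathsf{acc})^*\partial(e)_\alpha(x)$ if $x\in\{\mathsf{rej}\}\cup\mathrm{Out}$ and $\alpha\le b$; $\partial(e)_\alpha(\mathsf{acc})^*\partial(e)_\alpha(p,e')$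 if $x=(p,e';e^{(b)})$ and $\alpha\le b$; $0$ otherwise. Generalized guarded sum over $\Phi\subseteq\mathrm{At}$: $\mathrm{GS}_{\alpha\in\emptyset}e_\alpha:=\mathtt 0$ and $\mathrm{GS}_{\alpha\in\Phi}e_\alpha:=e_\gamma+_\gamma\mathrm{GS}_{\alpha\in\Phi\setminus\{\gamma\}}e_\alpha$ for some $\gamma\in\Phi$. Generalized weighted sum: $\bigoplus_{i\in I}r_i\cdot e_i:=e_j\oplus_{r_j,1}\big(\bigoplus_{i\in I\setminus\{j\}}r_i\cdot e_i\big)$ for some $j\in I$, the empty weighted sum being $\odot0$. Both are well defined up to $\equiv$. $E:\mathrm{Exp}\to S^{\mathrm{At}}$: $E(p)_\alpha=E(v)_\alpha=0$; $E(b)_\alpha=1$ if $\alpha\le b$ else $0$; $E(e\oplus_{r,s}f)_\alpha=rE(e)_\alpha+sE(f)_\alpha$; $E(e+_bf)_\alpha=E(e)_\alpha$ if $\alpha\le b$ else $E(f)_\alpha$; $E(e;f)_\alpha=E(e)_\alpha E(f)_\alpha$; $E(e^{(b)})_\alpha=E(\bar b)_\alpha$. The relation $\equiv$ is the smallest congruence on $\mathrm{Exp}$ (tests taken up to $\equiv_{BA}$; sequencing binds tighter than $\oplus$, $\odot$ binds tightest) containing, for all $e,f,g\in\mathrm{Exp}$, tests $b,c$, $v\in\mathrm{Out}$, $r,s,t,u\in S$: (G1) $e+_be\equiv e$; (G2) $e+_bf\equiv b;e+_bf$; (G3) $e+_bf\equiv f+_{\bar b}e$; (G4) $(e+_bf)+_cg\equiv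 e+_{bc}(f+_cg)$; (D1) $e\oplus_{r,s}(f+_bg)\equiv(e\oplus_{r,s}f)+_b(e\oplus_{r,s}g)$; (D2) $e\oplus_{r,s}(f\oplus_{t,u}g)\equiv e\oplus_{r,1}(f\oplus_{st,su}g)$; (D3) $b;(e\oplus_{r,s}f)\equiv b;(b;e\oplus_{r,s}b;f)$; (S1) $\mathtt 1;e\equiv e\equiv e;\mathtt 1$; (S2) $(e;f);g\equiv e;(f;g)$; (S3) $\mathtt 0;e\equiv\mathtt 0$; (S4) $(e\oplus_{r,s}f);g\equiv e;g\oplus_{r,s}f;g$; (S5) $(e+_bf);g\equiv e;g+_bf;g$; (S6) $v;e\equiv v$; (S7) $b;c\equiv bc$; (L1) $e^{(b)}\equiv e;e^{(b)}+_b\mathtt 1$; (C1) $\odot1\equiv\mathtt 1$; (C2) $\odot0;e\equiv\odot0$; (W1) $e\oplus_{r,s}e\equiv\odot(r+s);e$; (W2) $e\oplus_{r,s}f\equiv f\oplus_{s,r}e$; (W3) $e\oplus_{r,s}(f\oplus_{t,u}g)\equiv(e\oplus_{r,st}f)\oplus_{1,su}g$; (W4) $e\oplus_{ru,s}f\equiv(\odot u;e)\oplus_{r,s}f$; and closed under the rules (L2) if $e\equiv(f\oplus_{r,s}\mathtt 1)+_cg$ then $c;e^{(b)}\equiv c;((\odot(s^*r);f;e^{(b)})+_b\mathtt 1)$; (F1) if $g\equiv e;g+_bf$ and $E(e)_\alpha=0$ for all $\alpha\in\mathrm{At}$ then $g\equiv e^{(b)};f$. *)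

theory Defs
  imports Main
begin

datatype 't bexp = BZero | BOne | BVar 't | BNot "'t bexp" | BPlus "'t bexp" "'t bexp"
  | BAnd "'t bexp" "'t bexp"

text \<open>Atoms of the free Boolean algebra on the finite set T are identified with
  truth assignments 't \<Rightarrow> bool; alpha \<le> b means that b holds under alpha.\<close>
type_synonym 't atom = "'t \<Rightarrow> bool"

primrec evalB :: "'t bexp \<Rightarrow> 't atom \<Rightarrow> bool" where
  "evalB BZero \<alpha> = False"
| "evalB BOne \<alpha> = True"
| "evalB (BVar t) \<alpha> = \<alpha> t"
| "evalB (BNot b) \<alpha> = (\<not> evalB b \<alpha>)"
| "evalB (BPlus b c) \<alpha> = (evalB b \<alpha> \<or> evalB c \<alpha>)"
| "evalB (BAnd b c) \<alpha> = (evalB b \<alpha> \<and> evalB c \<alpha>)"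

definition beq :: "'t bexp \<Rightarrow> 't bexp \<Rightarrow> bool" where
  "beq b c \<longleftrightarrow> (\<forall>\<alpha>. evalB b \<alpha> = evalB c \<alpha>)"

text \<open>An atom regarded as a test (any test equivalent to it; unique up to beq).\<close>
definition atom_test :: "'t atom \<Rightarrow> 't bexp" where
  "atom_test \<alpha> = (SOME b. \<forall>\<beta>. evalB b \<beta> = (\<beta> = \<alpha>))"

datatype ('t, 'p, 'v, 's) exp =
    Act 'p
  | Test "'t bexp"
  | Guard "('t, 'p, 'v, 's) exp" "'t bexp" "('t, 'p, 'v, 's) exp"
  | Seq "('t, 'p, 'v, 's) exp" "('t, 'p, 'v, 's) exp"
  | Loop "('t, 'p, 'v, 's) exp" "'t bexp"
  | Ret 'v
  | Prob "('t, 'p, 'v, 's) exp" 's 's "('t, 'p, 'v, 's) exp"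

definition odot :: "'s::{semiring_0,monoid_mult} \<Rightarrow> ('t, 'p, 'v, 's) exp" where
  "odot r = Prob (Test BOne) r 0 (Test BZero)"

datatype ('p, 'v, 'e) dres = DAcc | DRej | DOut 'v | DAct 'p 'e

definition delta :: "'a \<Rightarrow> 'a \<Rightarrow> 's::{semiring_0,monoid_mult}" where
  "delta x = (\<lambda>y. if y = x then 1 else 0)"

text \<open>Finitely supported maps are represented as plain functions; sums over the
  (finite) support.\<close>
definition supp :: "('a \<Rightarrow> 's::zero) \<Rightarrow> 'a set" where
  "supp \<nu> = {x. \<nu> x \<noteq> 0}"

definition cont :: "('t, 'p, 'v, 's) exp \<Rightarrow> (('p, 'v, ('t, 'p, 'v, 's) exp) dres \<Rightarrow> 's)
    \<Rightarrow> ('p, 'v, ('t, 'p, 'v, 's) exp) dres \<Rightarrow> ('p, 'v, ('t, 'p, 'v, 's) exp) dres \<Rightarrow> 's::{semiring_0,monoid_mult}"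
  where
  "cont f df x = (case x of DAcc \<Rightarrow> df
       | DRej \<Rightarrow> delta DRej
       | DOut v \<Rightarrow> delta (DOut v)
       | DAct p e' \<Rightarrow> delta (DAct p (Seq e' f)))"

primrec deriv :: "('s \<Rightarrow> 's) \<Rightarrow> ('t, 'p, 'v, 's::{semiring_0,monoid_mult}) exp \<Rightarrow> 't atom
    \<Rightarrow> ('p, 'v, ('t, 'p, 'v, 's) exp) dres \<Rightarrow> 's" where
  "deriv st (Test b) \<alpha> = (if evalB b \<alpha> then delta DAcc else delta DRej)"
| "deriv st (Ret v) \<alpha> = delta (DOut v)"
| "deriv st (Act p) \<alpha> = delta (DAct p (Test BOne))"
| "deriv st (Guard e b f) \<alpha> = (if evalB b \<alpha> then deriv st e \<alpha> else deriv st f \<alpha>)"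
| "deriv st (Prob e r s f) \<alpha> = (\<lambda>x. r * deriv st e \<alpha> x + s * deriv st f \<alpha> x)"
| "deriv st (Seq e f) \<alpha> =
     (\<lambda>y. \<Sum>x\<in>supp (deriv st e \<alpha>). deriv st e \<alpha> x * cont f (deriv st f \<alpha>) x y)"
| "deriv st (Loop e b) \<alpha> =
     (\<lambda>x. case x of
        DAcc \<Rightarrow> (if \<not> evalB b \<alpha> then 1 else 0)
      | DRej \<Rightarrow> (if evalB b \<alpha> then st (deriv st e \<alpha> DAcc) * deriv st e \<alpha> DRej else 0)
      | DOut v \<Rightarrow> (if evalB b \<alpha> then st (deriv st e \<alpha> DAcc) * deriv st e \<alpha> (DOut v) else 0)
      | DAct p g \<Rightarrow> (case g of
            Seq e' h \<Rightarrow> (if h = Loop e b \<and> evalB b \<alpha>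
                          then st (deriv st e \<alpha> DAcc) * deriv st e \<alpha> (DAct p e') else 0)
          | _ \<Rightarrow> 0))"

primrec expD :: "('p, 'v, ('t, 'p, 'v, 's) exp) dres \<Rightarrow> ('t, 'p, 'v, 's) exp" where
  "expD DRej = Test BZero"
| "expD DAcc = Test BOne"
| "expD (DOut v) = Ret v"
| "expD (DAct p f) = Seq (Act p) f"

definition enum_of :: "'a set \<Rightarrow> 'a list" where
  "enum_of A = (SOME xs. distinct xs \<and> set xs = A)"

primrec gs_list :: "'t atom list \<Rightarrow> ('t atom \<Rightarrow> ('t, 'p, 'v, 's) exp) \<Rightarrow> ('t, 'p, 'v, 's) exp" where
  "gs_list [] e = Test BZero"
| "gs_list (\<gamma> # \<gamma>s) e = Guard (e \<gamma>) (atom_test \<gamma>) (gs_list \<gamma>s e)"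

definition GS :: "'t atom set \<Rightarrow> ('t atom \<Rightarrow> ('t, 'p, 'v, 's) exp) \<Rightarrow> ('t, 'p, 'v, 's) exp" where
  "GS \<Phi> e = gs_list (enum_of \<Phi>) e"

primrec ws_list :: "'i list \<Rightarrow> ('i \<Rightarrow> 's::{semiring_0,monoid_mult}) \<Rightarrow> ('i \<Rightarrow> ('t, 'p, 'v, 's) exp)
    \<Rightarrow> ('t, 'p, 'v, 's) exp" where
  "ws_list [] r e = odot 0"
| "ws_list (j # js) r e = Prob (e j) (r j) 1 (ws_list js r e)"

definition WS :: "'i set \<Rightarrow> ('i \<Rightarrow> 's::{semiring_0,monoid_mult}) \<Rightarrow> ('i \<Rightarrow> ('t, 'p, 'v, 's) exp)
    \<Rightarrow> ('t, 'p, 'v, 's) exp" where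
  "WS I r e = ws_list (enum_of I) r e"

primrec Ef :: "('t, 'p, 'v, 's::{semiring_0,monoid_mult}) exp \<Rightarrow> 't atom \<Rightarrow> 's" where
  "Ef (Act p) \<alpha> = 0"
| "Ef (Ret v) \<alpha> = 0"
| "Ef (Test b) \<alpha> = (if evalB b \<alpha> then 1 else 0)"
| "Ef (Prob e r s f) \<alpha> = r * Ef e \<alpha> + s * Ef f \<alpha>"
| "Ef (Guard e b f) \<alpha> = (if evalB b \<alpha> then Ef e \<alpha> else Ef f \<alpha>)"
| "Ef (Seq e f) \<alpha> = Ef e \<alpha> * Ef f \<alpha>"
| "Ef (Loop e b) \<alpha> = (if evalB (BNot b) \<alpha> then 1 else 0)"

inductive eqv :: "('s \<Rightarrow> 's) \<Rightarrow> ('t, 'p, 'v, 's::{semiring_0,monoid_mult}) exp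
    \<Rightarrow> ('t, 'p, 'v, 's) exp \<Rightarrow> bool" for st where
  refl: "eqv st e e"
| sym: "eqv st e f \<Longrightarrow> eqv st f e"
| trans: "eqv st e f \<Longrightarrow> eqv st f g \<Longrightarrow> eqv st e g"
| cong_guard: "eqv st e e' \<Longrightarrow> eqv st f f' \<Longrightarrow> eqv st (Guard e b f) (Guard e' b f')"
| cong_seq: "eqv st e e' \<Longrightarrow> eqv st f f' \<Longrightarrow> eqv st (Seq e f) (Seq e' f')"
| cong_loop: "eqv st e e' \<Longrightarrow> eqv st (Loop e b) (Loop e' b)"
| cong_prob: "eqv st e e' \<Longrightarrow> eqv st f f' \<Longrightarrow> eqv st (Prob e r s f) (Prob e' r s f')"
| ba_test: "beq b c \<Longrightarrow> eqv st (Test b) (Test c)"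
| ba_guard: "beq b c \<Longrightarrow> eqv st (Guard e b f) (Guard e c f)"
| ba_loop: "beq b c \<Longrightarrow> eqv st (Loop e b) (Loop e c)"
| G1: "eqv st (Guard e b e) e"
| G2: "eqv st (Guard e b f) (Guard (Seq (Test b) e) b f)"
| G3: "eqv st (Guard e b f) (Guard f (BNot b) e)"
| G4: "eqv st (Guard (Guard e b f) c g) (Guard e (BAnd b c) (Guard f c g))"
| D1: "eqv st (Prob e r s (Guard f b g)) (Guard (Prob e r s f) b (Prob e r s g))"
| D2: "eqv st (Prob e r s (Prob f t u g)) (Prob e r 1 (Prob f (s * t) (s * u) g))"
| D3: "eqv st (Seq (Test b) (Prob e r s f)) (Seq (Test b) (Prob (Seq (Test b) e) r s (Seq (Test b) f)))"
| S1a: "eqv st (Seq (Test BOne) e) e"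
| S1b: "eqv st e (Seq e (Test BOne))"
| S2: "eqv st (Seq (Seq e f) g) (Seq e (Seq f g))"
| S3: "eqv st (Seq (Test BZero) e) (Test BZero)"
| S4: "eqv st (Seq (Prob e r s f) g) (Prob (Seq e g) r s (Seq f g))"
| S5: "eqv st (Seq (Guard e b f) g) (Guard (Seq e g) b (Seq f g))"
| S6: "eqv st (Seq (Ret v) e) (Ret v)"
| S7: "eqv st (Seq (Test b) (Test c)) (Test (BAnd b c))"
| L1: "eqv st (Loop e b) (Guard (Seq e (Loop e b)) b (Test BOne))"
| C1: "eqv st (odot 1) (Test BOne)"
| C2: "eqv st (Seq (odot 0) e) (odot 0)"
| W1: "eqv st (Prob e r s e) (Seq (odot (r + s)) e)"
| W2: "eqv st (Prob e r s f) (Prob f s r e)"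
| W3: "eqv st (Prob e r s (Prob f t u g)) (Prob (Prob e r (s * t) f) 1 (s * u) g)"
| W4: "eqv st (Prob e (r * u) s f) (Prob (Seq (odot u) e) r s f)"
| L2: "eqv st e (Guard (Prob f r s (Test BOne)) c g) \<Longrightarrow>
       eqv st (Seq (Test c) (Loop e b))
              (Seq (Test c) (Guard (Seq (odot (st s * r)) (Seq f (Loop e b))) b (Test BOne)))"
| F1: "eqv st g (Guard (Seq e g) b f) \<Longrightarrow> (\<forall>\<alpha>. Ef e \<alpha> = 0) \<Longrightarrow> eqv st g (Seq (Loop e b) f)"

definition positive_sr :: "'s::{semiring_0,monoid_mult} itself \<Rightarrow> bool" where
  "positive_sr _ \<longleftrightarrow> (\<forall>x y :: 's. x + y = 0 \<longrightarrow> x = 0 \<and> y = 0)"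

definition refinement_sr :: "'s::{semiring_0,monoid_mult} itself \<Rightarrow> bool" where
  "refinement_sr _ \<longleftrightarrow> (\<forall>x y z w :: 's. x + y = z + w \<longrightarrow>
      (\<exists>s t u v. s + t = x \<and> s + u = z \<and> u + v = y \<and> t + v = w))"

definition conway :: "('s::{semiring_0,monoid_mult} \<Rightarrow> 's) \<Rightarrow> bool" where
  "conway st \<longleftrightarrow> (\<forall>a b. st (a + b) = st a * st (b * st a)) \<and>
                  (\<forall>a b. st (a * b) = 1 + a * st (b * a) * b)"

end

theory Submission
  imports Defs
begin

(* Call e and f equivalent under a test c if c;e \<equiv> c;f. An expression is determined
   by its behaviour under the atoms, and under an atom \<alpha> the guarded sum on the right-hand side
   selects its \<alpha>-summand. So it suffices to show, by structural induction on e, that under \<alpha>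
   the expression e is equivalent to the weighted sum of exp(d) with weights \<partial>(e)\<^sub>\<alpha>(d).
   Up to \<equiv>, weighted sums form a commutative monoid in which equal summands merge (W1-W4, D2),
   so two weighted sums that put the same total weight on every expression are equivalent. Each
   inductive case therefore reduces to rewriting e into some weighted sum of exp-images and
   checking that its weights are the ones prescribed by the defining clause of \<partial>.
   For a loop e^(b) under \<alpha> \<le> b, splitting the acc-summand off the expansion of the body
   brings the body into the shape required by rule L2. *)

lemmas [trans] = eqv.trans

subsection \<open>Tests and guarded choice\<close>

abbreviation eqv_under :: "('s \<Rightarrow> 's) \<Rightarrow> 't bexp
    \<Rightarrow> ('t, 'p, 'v, 's::{semiring_0,monoid_mult}) exp \<Rightarrow> ('t, 'p, 'v, 's) exp \<Rightarrow> bool"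
  where "eqv_under st c e f \<equiv> eqv st (Seq (Test c) e) (Seq (Test c) f)"

lemma eqv_under_cong: "eqv st e e' \<Longrightarrow> eqv_under st c e e'"
  by (rule eqv.cong_seq[OF eqv.refl])

lemma eqv_under_seq_left: "eqv_under st c e e' \<Longrightarrow> eqv_under st c (Seq e f) (Seq e' f)"
proof -
  assume "eqv_under st c e e'"
  have "eqv st (Seq (Test c) (Seq e f)) (Seq (Seq (Test c) e) f)" by (rule eqv.sym, rule eqv.S2)
  also have "eqv st \<dots> (Seq (Seq (Test c) e') f)" by (rule eqv.cong_seq, fact, rule eqv.refl)
  also have "eqv st \<dots> (Seq (Test c) (Seq e' f))" by (rule eqv.S2)
  finally show ?thesis .
qed

lemma seq_test_test: "eqv st (Seq (Test a) (Seq (Test c) x)) (Seq (Test (BAnd a c)) x)"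
proof -
  have "eqv st (Seq (Test a) (Seq (Test c) x)) (Seq (Seq (Test a) (Test c)) x)"
    by (rule eqv.sym, rule eqv.S2)
  also have "eqv st \<dots> (Seq (Test (BAnd a c)) x)" by (rule eqv.cong_seq, rule eqv.S7, rule eqv.refl)
  finally show ?thesis .
qed

lemma seq_test_beq: "beq a c \<Longrightarrow> eqv st (Seq (Test a) x) (Seq (Test c) x)"
  by (rule eqv.cong_seq, rule eqv.ba_test, assumption, rule eqv.refl)

lemma test_eqv_guard: "eqv st (Test b) (Guard (Test BOne) b (Test BZero))"
proof -
  have "eqv st (Test b) (Guard (Test b) b (Test b))" by (rule eqv.sym, rule eqv.G1)
  also have "eqv st \<dots> (Guard (Test b) (BNot b) (Test b))" by (rule eqv.G3)
  also have "eqv st \<dots> (Guard (Seq (Test (BNot b)) (Test b)) (BNot b) (Test b))" by (rule eqv.G2)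
  also have "eqv st \<dots> (Guard (Test (BAnd (BNot b) b)) (BNot b) (Test b))"
    by (rule eqv.cong_guard, rule eqv.S7, rule eqv.refl)
  also have "eqv st \<dots> (Guard (Test BZero) (BNot b) (Test b))"
    by (rule eqv.cong_guard, rule eqv.ba_test, simp add: beq_def, rule eqv.refl)
  also have "eqv st \<dots> (Guard (Test b) (BNot (BNot b)) (Test BZero))" by (rule eqv.G3)
  also have "eqv st \<dots> (Guard (Test b) b (Test BZero))" by (rule eqv.ba_guard, simp add: beq_def)
  also have "eqv st \<dots> (Guard (Test (BAnd b BOne)) b (Test BZero))"
    by (rule eqv.cong_guard, rule eqv.ba_test, simp add: beq_def, rule eqv.refl)
  also have "eqv st \<dots> (Guard (Seq (Test b) (Test BOne)) b (Test BZero))"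
    by (rule eqv.cong_guard, rule eqv.sym, rule eqv.S7, rule eqv.refl)
  also have "eqv st \<dots> (Guard (Test BOne) b (Test BZero))" by (rule eqv.sym, rule eqv.G2)
  finally show ?thesis .
qed

lemma seq_test_eqv_guard: "eqv st (Seq (Test b) g) (Guard g b (Test BZero))"
proof -
  have "eqv st (Seq (Test b) g) (Seq (Guard (Test BOne) b (Test BZero)) g)"
    by (rule eqv.cong_seq, rule test_eqv_guard, rule eqv.refl)
  also have "eqv st \<dots> (Guard (Seq (Test BOne) g) b (Seq (Test BZero) g))" by (rule eqv.S5)
  also have "eqv st \<dots> (Guard g b (Test BZero))" by (rule eqv.cong_guard, rule eqv.S1a, rule eqv.S3)
  finally show ?thesis .
qed

lemma guard_BZero: "eqv st (Guard e BZero f) f"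
proof -
  have killed: "eqv st (Guard x BZero f) (Guard (Test BZero) BZero f)" for x
  proof -
    have "eqv st (Guard x BZero f) (Guard (Seq (Test BZero) x) BZero f)" by (rule eqv.G2)
    also have "eqv st \<dots> (Guard (Test BZero) BZero f)" by (rule eqv.cong_guard, rule eqv.S3, rule eqv.refl)
    finally show ?thesis .
  qed
  have "eqv st (Guard e BZero f) (Guard f BZero f)" using killed[of e] killed[of f] by (meson eqv.sym eqv.trans)
  also have "eqv st \<dots> f" by (rule eqv.G1)
  finally show ?thesis .
qed

lemma guard_eqv_restricted: "eqv st (Guard x b y) (Guard (Seq (Test b) x) b (Seq (Test (BNot b)) y))"
proof -
  have "eqv st (Guard x b y) (Guard (Seq (Test b) x) b y)" by (rule eqv.G2)
  also have "eqv st \<dots> (Guard y (BNot b) (Seq (Test b) x))" by (rule eqv.G3)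
  also have "eqv st \<dots> (Guard (Seq (Test (BNot b)) y) (BNot b) (Seq (Test b) x))" by (rule eqv.G2)
  also have "eqv st \<dots> (Guard (Seq (Test b) x) (BNot (BNot b)) (Seq (Test (BNot b)) y))" by (rule eqv.G3)
  also have "eqv st \<dots> (Guard (Seq (Test b) x) b (Seq (Test (BNot b)) y))"
    by (rule eqv.ba_guard, simp add: beq_def)
  finally show ?thesis .
qed

lemma guard_cong_under:
  assumes "eqv_under st b x x'" and "eqv_under st (BNot b) y y'"
  shows "eqv st (Guard x b y) (Guard x' b y')"
proof -
  have "eqv st (Guard x b y) (Guard (Seq (Test b) x) b (Seq (Test (BNot b)) y))"
    by (rule guard_eqv_restricted)
  also have "eqv st \<dots> (Guard (Seq (Test b) x') b (Seq (Test (BNot b)) y'))"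
    by (rule eqv.cong_guard, rule assms(1), rule assms(2))
  also have "eqv st \<dots> (Guard x' b y')" by (rule eqv.sym, rule guard_eqv_restricted)
  finally show ?thesis .
qed

lemma eqv_under_guard_left:
  assumes "beq (BAnd b c) c"
  shows "eqv_under st c (Guard x b y) x"
proof -
  have "eqv st (Seq (Test c) (Guard x b y)) (Guard (Guard x b y) c (Test BZero))"
    by (rule seq_test_eqv_guard)
  also have "eqv st \<dots> (Guard x (BAnd b c) (Guard y c (Test BZero)))" by (rule eqv.G4)
  also have "eqv st \<dots> (Guard x c (Guard y c (Test BZero)))" by (rule eqv.ba_guard, rule assms)
  also have "eqv st \<dots> (Guard x c (Test BZero))"
  proof (rule guard_cong_under, rule eqv.refl)
    have "eqv st (Seq (Test (BNot c)) (Guard y c (Test BZero)))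
        (Guard (Guard y c (Test BZero)) (BNot c) (Test BZero))"
      by (rule seq_test_eqv_guard)
    also have "eqv st \<dots> (Guard y (BAnd c (BNot c)) (Guard (Test BZero) (BNot c) (Test BZero)))"
      by (rule eqv.G4)
    also have "eqv st \<dots> (Guard y BZero (Guard (Test BZero) (BNot c) (Test BZero)))"
      by (rule eqv.ba_guard, simp add: beq_def)
    also have "eqv st \<dots> (Test BZero)" by (rule eqv.trans[OF guard_BZero eqv.G1])
    also have "eqv st \<dots> (Test (BAnd (BNot c) BZero))" by (rule eqv.ba_test, simp add: beq_def)
    also have "eqv st \<dots> (Seq (Test (BNot c)) (Test BZero))" by (rule eqv.sym, rule eqv.S7)
    finally show "eqv_under st (BNot c) (Guard y c (Test BZero)) (Test BZero)" .
  qed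
  also have "eqv st \<dots> (Seq (Test c) x)" by (rule eqv.sym, rule seq_test_eqv_guard)
  finally show ?thesis .
qed

lemma eqv_under_guard_right:
  assumes "beq (BAnd c b) BZero"
  shows "eqv_under st c (Guard x b y) y"
proof -
  have "eqv st (Seq (Test c) (Guard x b y)) (Seq (Test c) (Guard y (BNot b) x))"
    by (rule eqv_under_cong, rule eqv.G3)
  also have "eqv st \<dots> (Seq (Test c) y)" by (rule eqv_under_guard_left, use assms in \<open>auto simp: beq_def\<close>)
  finally show ?thesis .
qed

lemma seq_test_BPlus:
  "eqv st (Seq (Test (BPlus a c)) g) (Guard (Seq (Test a) g) a (Seq (Test c) g))"
proof -
  have "eqv st (Seq (Test (BPlus a c)) g) (Guard (Seq (Test (BPlus a c)) g) a (Seq (Test (BPlus a c)) g))"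
    by (rule eqv.sym, rule eqv.G1)
  also have "eqv st \<dots> (Guard (Seq (Test a) g) a (Seq (Test c) g))"
  proof (rule guard_cong_under)
    show "eqv_under st a (Seq (Test (BPlus a c)) g) (Seq (Test a) g)"
    proof -
      have "eqv st (Seq (Test a) (Seq (Test (BPlus a c)) g)) (Seq (Test (BAnd a (BPlus a c))) g)"
        by (rule seq_test_test)
      also have "eqv st \<dots> (Seq (Test (BAnd a a)) g)" by (rule seq_test_beq, auto simp: beq_def)
      also have "eqv st \<dots> (Seq (Test a) (Seq (Test a) g))" by (rule eqv.sym, rule seq_test_test)
      finally show ?thesis .
    qed
    show "eqv_under st (BNot a) (Seq (Test (BPlus a c)) g) (Seq (Test c) g)"
    proof -
      have "eqv st (Seq (Test (BNot a)) (Seq (Test (BPlus a c)) g)) (Seq (Test (BAnd (BNot a) (BPlus a c))) g)"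
        by (rule seq_test_test)
      also have "eqv st \<dots> (Seq (Test (BAnd (BNot a) c)) g)" by (rule seq_test_beq, auto simp: beq_def)
      also have "eqv st \<dots> (Seq (Test (BNot a)) (Seq (Test c) g))" by (rule eqv.sym, rule seq_test_test)
      finally show ?thesis .
    qed
  qed
  finally show ?thesis .
qed

lemma eqv_under_BPlus:
  assumes "eqv_under st a e f" and "eqv_under st c e f"
  shows "eqv_under st (BPlus a c) e f"
proof -
  have "eqv st (Seq (Test (BPlus a c)) e) (Guard (Seq (Test a) e) a (Seq (Test c) e))"
    by (rule seq_test_BPlus)
  also have "eqv st \<dots> (Guard (Seq (Test a) f) a (Seq (Test c) f))"
    by (rule eqv.cong_guard, rule assms(1), rule assms(2))
  also have "eqv st \<dots> (Seq (Test (BPlus a c)) f)" by (rule eqv.sym, rule seq_test_BPlus)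
  finally show ?thesis .
qed

lemma eqv_under_BOne: "eqv_under st BOne e f \<Longrightarrow> eqv st e f"
  by (rule eqv.trans[OF eqv.sym[OF eqv.S1a]], erule eqv.trans, rule eqv.S1a)

lemma eqv_under_Loop:
  assumes body: "eqv_under st c e (Prob x 1 a (Test BOne))" and "beq (BAnd b c) c"
  shows "eqv_under st c (Loop e b) (Seq (odot (st a)) (Seq x (Loop e b)))"
proof -
  have "eqv st e (Guard e c e)" by (rule eqv.sym, rule eqv.G1)
  also have "eqv st \<dots> (Guard (Prob x 1 a (Test BOne)) c e)" by (rule guard_cong_under, rule body, rule eqv.refl)
  finally have "eqv st (Seq (Test c) (Loop e b))
      (Seq (Test c) (Guard (Seq (odot (st a * 1)) (Seq x (Loop e b))) b (Test BOne)))"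
    by (rule eqv.L2)
  also have "eqv st \<dots> (Seq (Test c) (Seq (odot (st a)) (Seq x (Loop e b))))"
    using eqv_under_guard_left[OF \<open>beq (BAnd b c) c\<close>] by simp
  finally show ?thesis .
qed

subsection \<open>Atoms\<close>

lemma evalB_atom_test:
  fixes \<alpha> :: "'t::finite atom"
  shows "evalB (atom_test \<alpha>) \<beta> = (\<beta> = \<alpha>)"
proof -
  obtain ts :: "'t list" where ts: "set ts = UNIV" using finite_list[of "UNIV :: 't set"] by auto
  define b where "b = foldr (\<lambda>t c. BAnd (if \<alpha> t then BVar t else BNot (BVar t)) c) ts BOne"
  have "evalB b \<gamma> = (\<forall>t\<in>set ts. \<gamma> t = \<alpha> t)" for \<gamma>
    unfolding b_def by (induction ts) auto
  then have "\<forall>\<gamma>. evalB b \<gamma> = (\<gamma> = \<alpha>)" using ts by (auto simp: fun_eq_iff)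
  then show ?thesis
    unfolding atom_test_def by (rule someI2[where Q = "\<lambda>b. evalB b \<beta> = (\<beta> = \<alpha>)"]) blast
qed

lemma eqv_by_atoms:
  fixes e f :: "('t::finite, 'p, 'v, 's::{semiring_0,monoid_mult}) exp"
  assumes atomwise: "\<And>\<alpha>. eqv_under st (atom_test \<alpha>) e f"
  shows "eqv st e f"
proof -
  have "\<exists>c. (\<forall>\<beta>. evalB c \<beta> = (\<beta> \<in> A)) \<and> eqv_under st c e f"
    if "finite A" for A :: "'t atom set"
    using that
  proof (induction A rule: finite_induct)
    case empty
    have "eqv_under st BZero e f" by (rule eqv.trans[OF eqv.S3 eqv.sym[OF eqv.S3]])
    then show ?case by (intro exI[of _ BZero]) simp
  next
    case (insert \<alpha> A)
    then obtain c where "\<forall>\<beta>. evalB c \<beta> = (\<beta> \<in> A)" and "eqv_under st c e f" by blast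
    moreover have "eqv_under st (BPlus (atom_test \<alpha>) c) e f"
      by (rule eqv_under_BPlus[OF atomwise \<open>eqv_under st c e f\<close>])
    ultimately show ?case by (intro exI[of _ "BPlus (atom_test \<alpha>) c"]) (auto simp: evalB_atom_test)
  qed
  from this[OF finite_UNIV] obtain c
    where "\<forall>\<beta>. evalB c \<beta> = (\<beta> \<in> UNIV)" and c: "eqv_under st c e f"
    by blast
  then have "beq BOne c" and "beq c BOne" by (simp_all add: beq_def)
  have "eqv st (Seq (Test BOne) e) (Seq (Test c) e)" by (rule seq_test_beq) fact
  also have "eqv st \<dots> (Seq (Test c) f)" by (rule c)
  also have "eqv st \<dots> (Seq (Test BOne) f)" by (rule seq_test_beq) fact
  finally show ?thesis by (rule eqv_under_BOne)
qed

lemma enum_of_finite: "finite A \<Longrightarrow> distinct (enum_of A) \<and> set (enum_of A) = A"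
  unfolding enum_of_def by (rule someI_ex) (use finite_distinct_list in blast)

lemma eqv_under_atom_guard:
  fixes \<alpha> :: "'t::finite atom"
  shows "eqv_under st (atom_test \<alpha>) (Guard x b y) (if evalB b \<alpha> then x else y)"
  by (cases "evalB b \<alpha>")
    (auto intro: eqv_under_guard_left eqv_under_guard_right simp: beq_def evalB_atom_test)

lemma eqv_under_gs_list:
  fixes \<alpha> :: "'t::finite atom"
  shows "\<alpha> \<in> set \<gamma>s \<Longrightarrow> eqv_under st (atom_test \<alpha>) (gs_list \<gamma>s g) (g \<alpha>)"
proof (induction \<gamma>s)
  case Nil
  then show ?case by simp
next
  case (Cons \<gamma> \<gamma>s)
  have "eqv_under st (atom_test \<alpha>) (gs_list (\<gamma> # \<gamma>s) g)
      (if \<gamma> = \<alpha> then g \<gamma> else gs_list \<gamma>s g)"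
    using eqv_under_atom_guard[of st \<alpha> "g \<gamma>" "atom_test \<gamma>"] by (simp add: evalB_atom_test eq_commute)
  with Cons show ?case by (cases "\<gamma> = \<alpha>") (auto intro: eqv.trans)
qed

lemma eqv_GS_UNIV:
  fixes e :: "('t::finite, 'p, 'v, 's::{semiring_0,monoid_mult}) exp"
  assumes "\<And>\<alpha>. eqv_under st (atom_test \<alpha>) e (g \<alpha>)"
  shows "eqv st e (GS UNIV g)"
proof (rule eqv_by_atoms)
  fix \<alpha> :: "'t atom"
  have "\<alpha> \<in> set (enum_of UNIV)" using enum_of_finite[OF finite_UNIV] by blast
  then have "eqv_under st (atom_test \<alpha>) (GS UNIV g) (g \<alpha>)" unfolding GS_def by (rule eqv_under_gs_list)
  with assms show "eqv_under st (atom_test \<alpha>) e (GS UNIV g)" by (blast intro: eqv.trans eqv.sym)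
qed

subsection \<open>Weighted sums\<close>

primrec ws :: "('s::{semiring_0,monoid_mult} \<times> ('t, 'p, 'v, 's) exp) list \<Rightarrow> ('t, 'p, 'v, 's) exp" where
  "ws [] = odot 0"
| "ws (q # qs) = Prob (snd q) (fst q) 1 (ws qs)"

definition scale :: "'s::{semiring_0,monoid_mult} \<Rightarrow> ('s \<times> 'a) list \<Rightarrow> ('s \<times> 'a) list" where
  "scale u qs = map (\<lambda>q. (u * fst q, snd q)) qs"

definition wt :: "('s::{semiring_0,monoid_mult} \<times> 'a) list \<Rightarrow> 'a \<Rightarrow> 's" where
  "wt qs x = sum_list (map fst (filter (\<lambda>q. snd q = x) qs))"

lemma WS_eq_ws: "WS I r e = ws (map (\<lambda>j. (r j, e j)) (enum_of I))"
proof -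
  have "ws_list js r e = ws (map (\<lambda>j. (r j, e j)) js)" for js by (induction js) auto
  then show ?thesis by (simp add: WS_def)
qed

lemma seq_odot: "eqv st (Seq (odot u) x) (Prob x u 0 (Test BZero))"
proof -
  have "eqv st (Seq (odot u) x) (Prob (Seq (Test BOne) x) u 0 (Seq (Test BZero) x))"
    unfolding odot_def by (rule eqv.S4)
  also have "eqv st \<dots> (Prob x u 0 (Test BZero))" by (rule eqv.cong_prob, rule eqv.S1a, rule eqv.S3)
  finally show ?thesis .
qed

lemma prob_one_zero_BZero: "eqv st e (Prob e 1 0 (Test BZero))"
proof -
  have "eqv st e (Seq (Test BOne) e)" by (rule eqv.sym, rule eqv.S1a)
  also have "eqv st \<dots> (Seq (odot 1) e)" by (rule eqv.cong_seq, rule eqv.sym, rule eqv.C1, rule eqv.refl)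
  also have "eqv st \<dots> (Prob e 1 0 (Test BZero))" by (rule seq_odot)
  finally show ?thesis .
qed

lemma prob_zero_one_odot: "eqv st (Prob x 0 1 g) (Prob (odot 0) 1 1 g)"
proof -
  have "eqv st (Prob x (1 * 0) 1 g) (Prob (Seq (odot 0) x) 1 1 g)" by (rule eqv.W4)
  also have "eqv st \<dots> (Prob (odot 0) 1 1 g)" by (rule eqv.cong_prob, rule eqv.C2, rule eqv.refl)
  finally show ?thesis by simp
qed

lemma prob_zero_one: "eqv st (Prob x 0 1 g) g"
proof -
  have "eqv st g (Prob g 1 0 (Test BZero))" by (rule prob_one_zero_BZero)
  also have "eqv st \<dots> (Prob (Test BZero) 0 1 g)" by (rule eqv.W2)
  also have "eqv st \<dots> (Prob (odot 0) 1 1 g)" by (rule prob_zero_one_odot)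
  also have "eqv st \<dots> (Prob x 0 1 g)" by (rule eqv.sym, rule prob_zero_one_odot)
  finally show ?thesis by (rule eqv.sym)
qed

lemma prob_odot_zero: "eqv st (Prob (odot 0) 1 1 g) g"
  by (rule eqv.trans[OF eqv.sym[OF prob_zero_one_odot] prob_zero_one])

lemma prob_one_zero: "eqv st (Prob e 1 0 f) e"
  by (rule eqv.trans[OF eqv.W2 prob_zero_one])

lemma seq_odot_prob: "eqv st (Seq (odot u) (Prob e r s f)) (Prob e (u * r) (u * s) f)"
proof -
  have "eqv st (Seq (odot u) (Prob e r s f)) (Prob (Prob e r s f) u 0 (Test BZero))" by (rule seq_odot)
  also have "eqv st \<dots> (Prob (Test BZero) 0 u (Prob e r s f))" by (rule eqv.W2)
  also have "eqv st \<dots> (Prob (Test BZero) 0 1 (Prob e (u * r) (u * s) f))" by (rule eqv.D2)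
  also have "eqv st \<dots> (Prob e (u * r) (u * s) f)" by (rule prob_zero_one)
  finally show ?thesis .
qed

lemma prob_odot_right: "eqv st (Prob e r u f) (Prob e r 1 (Seq (odot u) f))"
proof -
  have "eqv st (Prob e r u f) (Prob e r u (Prob f 1 0 (Test BZero)))"
    by (rule eqv.cong_prob, rule eqv.refl, rule prob_one_zero_BZero)
  also have "eqv st \<dots> (Prob e r 1 (Prob f (u * 1) (u * 0) (Test BZero)))" by (rule eqv.D2)
  also have "eqv st \<dots> (Prob e r 1 (Seq (odot u) f))"
    by (simp, rule eqv.cong_prob, rule eqv.refl, rule eqv.sym, rule seq_odot)
  finally show ?thesis .
qed

lemma prob_swap: "eqv st (Prob e r 1 (Prob f s 1 g)) (Prob f s 1 (Prob e r 1 g))"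
proof -
  have "eqv st (Prob e r 1 (Prob f s 1 g)) (Prob (Prob e r (1 * s) f) 1 (1 * 1) g)" by (rule eqv.W3)
  also have "eqv st \<dots> (Prob (Prob f s (1 * r) e) 1 (1 * 1) g)"
    by (simp, rule eqv.cong_prob, rule eqv.W2, rule eqv.refl)
  also have "eqv st \<dots> (Prob f s 1 (Prob e r 1 g))" by (rule eqv.sym, rule eqv.W3)
  finally show ?thesis .
qed

lemma prob_merge: "eqv st (Prob e r 1 (Prob e s 1 g)) (Prob e (r + s) 1 g)"
proof -
  have "eqv st (Prob e r 1 (Prob e s 1 g)) (Prob (Prob e r (1 * s) e) 1 (1 * 1) g)" by (rule eqv.W3)
  also have "eqv st \<dots> (Prob (Seq (odot (r + s)) e) 1 1 g)"
    by (simp, rule eqv.cong_prob, rule eqv.W1, rule eqv.refl)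
  also have "eqv st \<dots> (Prob e (1 * (r + s)) 1 g)" by (rule eqv.sym, rule eqv.W4)
  finally show ?thesis by simp
qed

lemma prob_assoc: "eqv st (Prob (Prob e r 1 f) 1 1 g) (Prob e r 1 (Prob f 1 1 g))"
  using eqv.W3[of st e r 1 f 1 1 g] by (simp add: eqv.sym)

lemma ws_append: "eqv st (Prob (ws qs) 1 1 (ws rs)) (ws (qs @ rs))"
proof (induction qs)
  case Nil
  then show ?case by (simp add: prob_odot_zero)
next
  case (Cons q qs)
  have "eqv st (Prob (ws (q # qs)) 1 1 (ws rs)) (Prob (snd q) (fst q) 1 (Prob (ws qs) 1 1 (ws rs)))"
    by (simp add: prob_assoc)
  also have "eqv st \<dots> (ws ((q # qs) @ rs))" by (simp, rule eqv.cong_prob, rule eqv.refl, rule Cons.IH)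
  finally show ?case .
qed

lemma ws_scale: "eqv st (Seq (odot u) (ws qs)) (ws (scale u qs))"
proof (induction qs)
  case Nil
  have "eqv st (Seq (odot u) (odot 0)) (Prob (Test BOne) (u * 0) (u * 0) (Test BZero))"
    unfolding odot_def[of 0] by (rule seq_odot_prob)
  then show ?case by (simp add: scale_def odot_def)
next
  case (Cons q qs)
  have "eqv st (Seq (odot u) (ws (q # qs))) (Prob (snd q) (u * fst q) (u * 1) (ws qs))"
    by (simp add: seq_odot_prob del: mult_1_right)
  also have "eqv st \<dots> (Prob (snd q) (u * fst q) 1 (Seq (odot u) (ws qs)))" by (simp add: prob_odot_right)
  also have "eqv st \<dots> (ws (scale u (q # qs)))"
    by (simp add: scale_def, rule eqv.cong_prob, rule eqv.refl, use Cons.IH in \<open>simp add: scale_def\<close>)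
  finally show ?case .
qed

lemma ws_Prob:
  assumes "eqv st x (ws qs)" and "eqv st y (ws rs)"
  shows "eqv st (Prob x r s y) (ws (scale r qs @ scale s rs))"
proof -
  have "eqv st (Prob x (1 * r) s y) (Prob (Seq (odot r) x) 1 s y)" by (rule eqv.W4)
  also have "eqv st \<dots> (Prob y (1 * s) 1 (Seq (odot r) x))" by (simp, rule eqv.W2)
  also have "eqv st \<dots> (Prob (Seq (odot s) y) 1 1 (Seq (odot r) x))" by (rule eqv.W4)
  also have "eqv st \<dots> (Prob (Seq (odot r) x) 1 1 (Seq (odot s) y))" by (rule eqv.W2)
  also have "eqv st \<dots> (Prob (ws (scale r qs)) 1 1 (ws (scale s rs)))"
    by (rule eqv.cong_prob; rule eqv.trans[OF eqv.cong_seq[OF eqv.refl] ws_scale], rule assms)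
  also have "eqv st \<dots> (ws (scale r qs @ scale s rs))" by (rule ws_append)
  finally show ?thesis by simp
qed

lemma ws_single: "eqv st (ws [(1, x)]) x"
proof -
  have "eqv st (Prob x 1 0 (odot 1)) (Prob x 1 1 (Prob (Test BOne) (0 * 1) (0 * 0) (Test BZero)))"
    unfolding odot_def by (rule eqv.D2)
  then have "eqv st (ws [(1, x)]) (Prob x 1 0 (odot 1))" by (simp add: odot_def eqv.sym)
  then show ?thesis using prob_one_zero by (rule eqv.trans)
qed

lemma ws_Seq: "eqv st (Seq (ws qs) g) (ws (map (\<lambda>q. (fst q, Seq (snd q) g)) qs))"
proof (induction qs)
  case Nil
  then show ?case by (simp add: eqv.C2)
next
  case (Cons q qs)
  have "eqv st (Seq (Prob (snd q) (fst q) 1 (ws qs)) g) (Prob (Seq (snd q) g) (fst q) 1 (Seq (ws qs) g))"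
    by (rule eqv.S4)
  also have "eqv st \<dots> (Prob (Seq (snd q) g) (fst q) 1 (ws (map (\<lambda>q. (fst q, Seq (snd q) g)) qs)))"
    by (rule eqv.cong_prob, rule eqv.refl, rule Cons.IH)
  finally show ?case by simp
qed

lemma ws_flatten:
  assumes "\<And>d. d \<in> set ds \<Longrightarrow> eqv_under st c (x d) (ws (qs d))"
  shows "eqv_under st c (ws (map (\<lambda>d. (\<nu> d, x d)) ds)) (ws (concat (map (\<lambda>d. scale (\<nu> d) (qs d)) ds)))"
  using assms
proof (induction ds)
  case Nil
  then show ?case by (simp add: eqv.refl)
next
  case (Cons d ds)
  let ?r = "ws (map (\<lambda>d. (\<nu> d, x d)) ds)"
  let ?r' = "ws (concat (map (\<lambda>d. scale (\<nu> d) (qs d)) ds))"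
  have "eqv st (Seq (Test c) (ws (map (\<lambda>d. (\<nu> d, x d)) (d # ds))))
      (Seq (Test c) (Prob (Seq (Test c) (x d)) (\<nu> d) 1 (Seq (Test c) ?r)))"
    by (simp, rule eqv.D3)
  also have "eqv st \<dots> (Seq (Test c) (Prob (Seq (Test c) (ws (qs d))) (\<nu> d) 1 (Seq (Test c) ?r')))"
    by (rule eqv_under_cong, rule eqv.cong_prob; use Cons in simp)
  also have "eqv st \<dots> (Seq (Test c) (Prob (ws (qs d)) (\<nu> d) 1 ?r'))" by (rule eqv.sym, rule eqv.D3)
  also have "eqv st \<dots> (Seq (Test c) (ws (scale (\<nu> d) (qs d) @ scale 1 (concat
      (map (\<lambda>d. scale (\<nu> d) (qs d)) ds)))))"
    by (rule eqv_under_cong, rule ws_Prob; rule eqv.refl)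
  finally show ?case by (simp add: scale_def)
qed

lemma wt_Nil [simp]: "wt [] x = 0"
  by (simp add: wt_def)

lemma wt_Cons [simp]: "wt (q # qs) x = (if snd q = x then fst q + wt qs x else wt qs x)"
  by (simp add: wt_def)

lemma wt_append [simp]: "wt (qs @ rs) x = wt qs x + wt rs x"
  by (simp add: wt_def)

lemma wt_scale [simp]: "wt (scale u qs) x = u * wt qs x"
  by (induction qs) (auto simp: scale_def distrib_left)

lemma wt_concat_scale:
  "wt (concat (map (\<lambda>d. scale (\<nu> d) (qs d)) ds)) x = (\<Sum>d\<leftarrow>ds. \<nu> d * wt (qs d) x)"
  by (induction ds) auto

lemma wt_not_occurring: "x \<notin> snd ` set qs \<Longrightarrow> wt qs x = 0"
  by (induction qs) auto

lemma wt_filter: "wt (filter (\<lambda>q. snd q \<noteq> x) qs) y = (if y = x then 0 else wt qs y)"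
  by (induction qs) auto

lemma ws_pull: "eqv st (ws qs) (Prob x (wt qs x) 1 (ws (filter (\<lambda>q. snd q \<noteq> x) qs)))"
proof (induction qs)
  case Nil
  then show ?case by (simp, rule eqv.sym, rule prob_zero_one)
next
  case (Cons q qs)
  let ?rest = "ws (filter (\<lambda>q. snd q \<noteq> x) qs)"
  have "eqv st (ws (q # qs)) (Prob (snd q) (fst q) 1 (Prob x (wt qs x) 1 ?rest))"
    using Cons.IH by (simp, intro eqv.cong_prob eqv.refl)
  also have "eqv st \<dots> (if snd q = x then Prob x (fst q + wt qs x) 1 ?rest
      else Prob x (wt qs x) 1 (Prob (snd q) (fst q) 1 ?rest))"
    using prob_merge prob_swap by (cases "snd q = x") auto
  finally show ?case by (simp split: if_splits)
qed

lemma ws_eqv_if_wt_eq: "wt qs = wt rs \<Longrightarrow> eqv st (ws qs) (ws rs)"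
proof (induction "length qs + length rs" arbitrary: qs rs rule: less_induct)
  case less
  show ?case
  proof (cases "qs @ rs = []")
    case True
    then show ?thesis by (simp add: eqv.refl)
  next
    case False
    then obtain x where x: "x \<in> snd ` set (qs @ rs)" by (metis image_eqI list.set_intros(1) neq_Nil_conv)
    let ?qs' = "filter (\<lambda>q. snd q \<noteq> x) qs" and ?rs' = "filter (\<lambda>q. snd q \<noteq> x) rs"
    have "length ?qs' < length qs \<or> length ?rs' < length rs"
      using x by (auto intro!: length_filter_less)
    then have "length ?qs' + length ?rs' < length qs + length rs"
      using length_filter_le[of "\<lambda>q. snd q \<noteq> x" qs] length_filter_le[of "\<lambda>q. snd q \<noteq> x" rs]
      by linarith
    moreover have "wt ?qs' = wt ?rs'" using less.prems by (auto simp: fun_eq_iff wt_filter)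
    ultimately have IH: "eqv st (ws ?qs') (ws ?rs')" using less.hyps by blast
    have "eqv st (ws qs) (Prob x (wt qs x) 1 (ws ?qs'))" by (rule ws_pull)
    also have "eqv st \<dots> (Prob x (wt rs x) 1 (ws ?rs'))"
      using less.prems IH by (simp, intro eqv.cong_prob eqv.refl)
    also have "eqv st \<dots> (ws rs)" by (rule eqv.sym, rule ws_pull)
    finally show ?thesis .
  qed
qed

subsection \<open>Expansions of derivatives\<close>

lemma expD_eq_iff [simp]: "expD d = expD d' \<longleftrightarrow> d = d'"
  by (cases d; cases d') auto

lemma wt_single_expD: "wt [(1, expD d)] (expD y) = delta d y"
  by (simp add: delta_def)

definition dres_seq ::
  "('t, 'p, 'v, 's) exp \<Rightarrow> ('p, 'v, ('t, 'p, 'v, 's) exp) dres \<Rightarrow> ('p, 'v, ('t, 'p, 'v, 's) exp) dres"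
  where "dres_seq f d = (case d of DAct p e' \<Rightarrow> DAct p (Seq e' f) | _ \<Rightarrow> d)"

lemma cont_eq_dres_seq: "cont f \<mu> d = (if d = DAcc then \<mu> else delta (dres_seq f d))"
  by (cases d) (simp_all add: cont_def dres_seq_def)

lemma seq_expD: "d \<noteq> DAcc \<Longrightarrow> eqv st (Seq (expD d) f) (expD (dres_seq f d))"
  by (cases d) (auto simp: dres_seq_def intro: eqv.S3 eqv.S6 eqv.S2)

lemma inj_dres_seq: "inj (dres_seq f)"
  by (rule injI) (auto simp: dres_seq_def split: dres.splits)

lemma ws_Seq_expD:
  "DAcc \<notin> set ds \<Longrightarrow>
    eqv st (Seq (ws (map (\<lambda>d. (\<nu> d, expD d)) ds)) f) (ws (map (\<lambda>d. (\<nu> d, expD (dres_seq f d))) ds))"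
proof (induction ds)
  case Nil
  then show ?case by (simp add: eqv.C2)
next
  case (Cons d ds)
  then show ?case by (simp, intro eqv.trans[OF eqv.S4] eqv.cong_prob seq_expD) auto
qed

lemma wt_map_expD_delta:
  "wt (map (\<lambda>d. (\<nu> d, expD (g d))) ds) (expD y) = (\<Sum>d\<leftarrow>ds. \<nu> d * delta (g d) y)"
  by (induction ds) (auto simp: delta_def)

lemma sum_mult_delta_inj:
  assumes "finite T" and "inj g"
  shows "(\<Sum>d\<in>T. \<nu> d * delta (g d) (g d\<^sub>0)) =
    (if d\<^sub>0 \<in> T then \<nu> d\<^sub>0 else (0::'s::{semiring_0,monoid_mult}))"
proof -
  have "(\<Sum>d\<in>T. \<nu> d * delta (g d) (g d\<^sub>0)) = (\<Sum>d\<in>T. if d = d\<^sub>0 then \<nu> d else 0)"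
    using \<open>inj g\<close> by (intro sum.cong) (auto simp: delta_def dest: injD)
  also have "\<dots> = (if d\<^sub>0 \<in> T then \<nu> d\<^sub>0 else 0)" using \<open>finite T\<close> by (simp add: sum.delta')
  finally show ?thesis .
qed

lemma sum_mult_delta_not_in_image:
  "y \<notin> g ` T \<Longrightarrow> (\<Sum>d\<in>T. \<nu> d * delta (g d) y) = (0::'s::{semiring_0,monoid_mult})"
  by (rule sum.neutral) (auto simp: delta_def)

definition expansion_terms :: "(('p, 'v, ('t, 'p, 'v, 's) exp) dres \<Rightarrow> 's::{semiring_0,monoid_mult})
    \<Rightarrow> ('s \<times> ('t, 'p, 'v, 's) exp) list"
  where "expansion_terms \<nu> = map (\<lambda>d. (\<nu> d, expD d)) (enum_of (supp \<nu>))"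

lemma WS_supp_expD: "WS (supp \<nu>) \<nu> expD = ws (expansion_terms \<nu>)"
  by (simp add: WS_eq_ws expansion_terms_def)

lemma expansion_terms_range: "snd ` set (expansion_terms \<nu>) \<subseteq> range expD"
  by (auto simp: expansion_terms_def)

lemma wt_map_expD:
  "distinct ds \<Longrightarrow> wt (map (\<lambda>d. (\<nu> d, expD d)) ds) (expD y) = (if y \<in> set ds then \<nu> y else 0)"
  by (induction ds) auto

lemma wt_expansion_terms: "finite (supp \<nu>) \<Longrightarrow> wt (expansion_terms \<nu>) (expD y) = \<nu> y"
  using enum_of_finite[of "supp \<nu>"] by (auto simp: expansion_terms_def wt_map_expD supp_def)

lemma expansion_terms_eqv_ws:
  assumes wt_qs: "\<And>d. \<nu> d = wt qs (expD d)" and range_qs: "snd ` set qs \<subseteq> range expD"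
  shows "finite (supp \<nu>) \<and> eqv st (ws (expansion_terms \<nu>)) (ws qs)"
proof
  have "supp \<nu> \<subseteq> expD -` (snd ` set qs)"
    using wt_qs wt_not_occurring unfolding supp_def by fastforce
  moreover have "finite (expD -` (snd ` set qs))" by (rule finite_vimageI) (auto intro: injI)
  ultimately show fin: "finite (supp \<nu>)" by (rule finite_subset)
  have "wt (expansion_terms \<nu>) x = wt qs x" for x
  proof (cases "x \<in> range expD")
    case True
    then show ?thesis using wt_qs wt_expansion_terms[OF fin] by auto
  next
    case False
    then have "x \<notin> snd ` set qs" and "x \<notin> snd ` set (expansion_terms \<nu>)"
      using range_qs expansion_terms_range[of \<nu>] by blast+
    then show ?thesis by (simp add: wt_not_occurring)
  qed
  then show "eqv st (ws (expansion_terms \<nu>)) (ws qs)" by (intro ws_eqv_if_wt_eq ext)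
qed

definition expands_at ::
    "('s \<Rightarrow> 's) \<Rightarrow> 't atom \<Rightarrow> ('t, 'p, 'v, 's::{semiring_0,monoid_mult}) exp \<Rightarrow> bool" where
  "expands_at st \<alpha> e \<longleftrightarrow> finite (supp (deriv st e \<alpha>)) \<and>
     eqv_under st (atom_test \<alpha>) e (ws (expansion_terms (deriv st e \<alpha>)))"

lemma expands_atI:
  assumes "\<And>d. deriv st e \<alpha> d = wt qs (expD d)" and "snd ` set qs \<subseteq> range expD"
    and "eqv_under st (atom_test \<alpha>) e (ws qs)"
  shows "expands_at st \<alpha> e"
proof -
  note canonical = expansion_terms_eqv_ws[OF assms(1,2), of st]
  have "eqv_under st (atom_test \<alpha>) e (ws (expansion_terms (deriv st e \<alpha>)))"
    using assms(3) eqv_under_cong[OF eqv.sym[OF conjunct2[OF canonical]]] by (rule eqv.trans)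
  with canonical show ?thesis unfolding expands_at_def by blast
qed

lemma expands_at_delta:
  assumes "deriv st e \<alpha> = delta d" and "eqv_under st (atom_test \<alpha>) e (expD d)"
  shows "expands_at st \<alpha> e"
proof (rule expands_atI)
  show "deriv st e \<alpha> y = wt [(1, expD d)] (expD y)" for y by (simp only: assms(1) wt_single_expD)
  show "snd ` set [(1, expD d)] \<subseteq> range expD" by auto
  show "eqv_under st (atom_test \<alpha>) e (ws [(1, expD d)])"
    using assms(2) eqv_under_cong[OF eqv.sym[OF ws_single]] by (rule eqv.trans)
qed

subsection \<open>The expansion property for each constructor\<close>

context
  fixes st :: "'s::{semiring_0,monoid_mult} \<Rightarrow> 's" and \<alpha> :: "'t::finite atom"
begin

lemma expands_at_Test: "expands_at st \<alpha> (Test b)"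
proof (rule expands_at_delta)
  let ?d = "if evalB b \<alpha> then DAcc else DRej"
  show "deriv st (Test b) \<alpha> = delta ?d" by simp
  have "eqv st (Seq (Test (atom_test \<alpha>)) (Test b)) (Test (BAnd (atom_test \<alpha>) b))" by (rule eqv.S7)
  also have "eqv st \<dots> (Test (BAnd (atom_test \<alpha>) (if evalB b \<alpha> then BOne else BZero)))"
    by (rule eqv.ba_test) (auto simp: beq_def evalB_atom_test)
  also have "eqv st \<dots> (Seq (Test (atom_test \<alpha>)) (expD ?d))" by (rule eqv.sym) (simp add: eqv.S7)
  finally show "eqv_under st (atom_test \<alpha>) (Test b) (expD ?d)" .
qed

lemma expands_at_Ret: "expands_at st \<alpha> (Ret v)"
  by (rule expands_at_delta[where d = "DOut v"]) (simp_all add: eqv.refl)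

lemma expands_at_Act: "expands_at st \<alpha> (Act p)"
  by (rule expands_at_delta[where d = "DAct p (Test BOne)"]) (simp_all add: eqv_under_cong eqv.S1b)

lemma expands_at_Guard:
  assumes "expands_at st \<alpha> e" and "expands_at st \<alpha> f"
  shows "expands_at st \<alpha> (Guard e b f)"
proof -
  have "eqv_under st (atom_test \<alpha>) (Guard e b f) (if evalB b \<alpha> then e else f)"
    by (rule eqv_under_atom_guard)
  with assms show ?thesis by (cases "evalB b \<alpha>") (auto simp: expands_at_def intro: eqv.trans)
qed

lemma expands_at_Prob:
  assumes "expands_at st \<alpha> e" and "expands_at st \<alpha> f"
  shows "expands_at st \<alpha> (Prob e r s f)"
proof (rule expands_atI)
  let ?qe = "expansion_terms (deriv st e \<alpha>)" and ?qf = "expansion_terms (deriv st f \<alpha>)"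
  let ?A = "Test (atom_test \<alpha>)"
  show "deriv st (Prob e r s f) \<alpha> d = wt (scale r ?qe @ scale s ?qf) (expD d)" for d
    using assms by (simp add: expands_at_def wt_expansion_terms)
  show "snd ` set (scale r ?qe @ scale s ?qf) \<subseteq> range expD"
    using expansion_terms_range[of "deriv st e \<alpha>"] expansion_terms_range[of "deriv st f \<alpha>"]
    by (auto simp: scale_def)
  have "eqv st (Seq ?A (Prob e r s f)) (Seq ?A (Prob (Seq ?A e) r s (Seq ?A f)))" by (rule eqv.D3)
  also have "eqv st \<dots> (Seq ?A (Prob (Seq ?A (ws ?qe)) r s (Seq ?A (ws ?qf))))"
    by (rule eqv_under_cong, rule eqv.cong_prob) (use assms in \<open>simp add: expands_at_def\<close>)+
  also have "eqv st \<dots> (Seq ?A (Prob (ws ?qe) r s (ws ?qf)))" by (rule eqv.sym, rule eqv.D3)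
  also have "eqv st \<dots> (Seq ?A (ws (scale r ?qe @ scale s ?qf)))"
    by (rule eqv_under_cong, rule ws_Prob; rule eqv.refl)
  finally show "eqv_under st (atom_test \<alpha>) (Prob e r s f) (ws (scale r ?qe @ scale s ?qf))" .
qed

lemma expands_at_Seq:
  assumes he: "expands_at st \<alpha> e" and hf: "expands_at st \<alpha> f"
  shows "expands_at st \<alpha> (Seq e f)"
proof -
  let ?A = "Test (atom_test \<alpha>)"
  define \<nu> where "\<nu> = deriv st e \<alpha>"
  define ds where "ds = enum_of (supp \<nu>)"
  have ds: "distinct ds" "set ds = supp \<nu>"
    using he enum_of_finite by (auto simp: expands_at_def ds_def \<nu>_def)
  define qs where
    "qs d = (if d = DAcc then expansion_terms (deriv st f \<alpha>) else [(1, expD (dres_seq f d))])" for d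
  have wt_qs: "wt (qs d) (expD y) = cont f (deriv st f \<alpha>) d y" for d y
    using hf by (simp add: qs_def cont_eq_dres_seq expands_at_def wt_expansion_terms delta_def)
  have seq_eqv_qs: "eqv_under st (atom_test \<alpha>) (Seq (expD d) f) (ws (qs d))" for d
  proof (cases "d = DAcc")
    case True
    have "eqv st (Seq ?A (Seq (Test BOne) f)) (Seq ?A f)" by (rule eqv_under_cong, rule eqv.S1a)
    also have "eqv st \<dots> (Seq ?A (ws (qs d)))" using hf True by (simp add: qs_def expands_at_def)
    finally show ?thesis using True by simp
  next
    case False
    have "eqv st (Seq (expD d) f) (ws (qs d))"
      using seq_expD[OF False] eqv.sym[OF ws_single] False by (simp add: qs_def) (rule eqv.trans)
    then show ?thesis by (rule eqv_under_cong)
  qed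
  show ?thesis
  proof (rule expands_atI)
    show "deriv st (Seq e f) \<alpha> y = wt (concat (map (\<lambda>d. scale (\<nu> d) (qs d)) ds)) (expD y)" for y
      by (simp add: wt_concat_scale wt_qs sum_list_distinct_conv_sum_set ds \<nu>_def)
    show "snd ` set (concat (map (\<lambda>d. scale (\<nu> d) (qs d)) ds)) \<subseteq> range expD"
      using expansion_terms_range[of "deriv st f \<alpha>"] by (fastforce simp: qs_def scale_def split: if_splits)
    have "eqv st (Seq ?A (Seq e f)) (Seq ?A (Seq (ws (expansion_terms \<nu>)) f))"
      using he by (simp add: eqv_under_seq_left expands_at_def \<nu>_def)
    also have "eqv st \<dots> (Seq ?A (ws (map (\<lambda>d. (\<nu> d, Seq (expD d) f)) ds)))"
      using ws_Seq[of st "expansion_terms \<nu>" f]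
      by (simp add: eqv_under_cong expansion_terms_def ds_def o_def)
    also have "eqv st \<dots> (Seq ?A (ws (concat (map (\<lambda>d. scale (\<nu> d) (qs d)) ds))))"
      by (rule ws_flatten, rule seq_eqv_qs)
    finally show "eqv_under st (atom_test \<alpha>) (Seq e f) (ws (concat (map (\<lambda>d. scale (\<nu> d) (qs d)) ds)))" .
  qed
qed

lemma deriv_Loop_false: "\<not> evalB b \<alpha> \<Longrightarrow> deriv st (Loop e b) \<alpha> = delta DAcc"
  by (rule ext, simp add: delta_def split: dres.split exp.split)

lemma deriv_Loop_true:
  assumes "finite (supp (deriv st e \<alpha>))" and "evalB b \<alpha>"
  shows "deriv st (Loop e b) \<alpha> y = st (deriv st e \<alpha> DAcc) *
    (\<Sum>d\<in>supp (deriv st e \<alpha>) - {DAcc}. deriv st e \<alpha> d * delta (dres_seq (Loop e b) d) y)"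
proof -
  let ?\<nu> = "deriv st e \<alpha>" and ?g = "dres_seq (Loop e b)"
  let ?sum = "\<lambda>y. \<Sum>d\<in>supp ?\<nu> - {DAcc}. ?\<nu> d * delta (?g d) y"
  have sum_image: "?sum (?g d\<^sub>0) = (if d\<^sub>0 = DAcc then 0 else ?\<nu> d\<^sub>0)" for d\<^sub>0
    using sum_mult_delta_inj[OF _ inj_dres_seq, of "supp ?\<nu> - {DAcc}" ?\<nu>] assms(1)
    by (auto simp: supp_def)
  show ?thesis
  proof (cases "y \<in> range ?g")
    case True
    then obtain d\<^sub>0 where "y = ?g d\<^sub>0" by blast
    then show ?thesis using assms(2) sum_image[of d\<^sub>0] by (cases d\<^sub>0) (auto simp: dres_seq_def)
  next
    case False
    then have "?sum y = 0" by (auto intro: sum_mult_delta_not_in_image)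
    moreover have "deriv st (Loop e b) \<alpha> y = 0"
    proof (cases y)
      case (DAct p g)
      have "g \<noteq> Seq e' (Loop e b)" for e'
      proof
        assume "g = Seq e' (Loop e b)"
        then have "y = ?g (DAct p e')" using DAct by (simp add: dres_seq_def)
        with False show False by blast
      qed
      then show ?thesis using DAct by (cases g) auto
    qed (use False in \<open>auto simp: dres_seq_def split: dres.splits\<close>)
    ultimately show ?thesis by simp
  qed
qed

lemma expands_at_Loop_exit:
  assumes "\<not> evalB b \<alpha>"
  shows "expands_at st \<alpha> (Loop e b)"
proof (rule expands_at_delta)
  show "deriv st (Loop e b) \<alpha> = delta DAcc" using assms by (rule deriv_Loop_false)
  have "eqv_under st (atom_test \<alpha>) (Loop e b) (Guard (Seq e (Loop e b)) b (Test BOne))"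
    by (rule eqv_under_cong, rule eqv.L1)
  also have "eqv st \<dots> (Seq (Test (atom_test \<alpha>)) (Test BOne))"
    using eqv_under_atom_guard[of st \<alpha> "Seq e (Loop e b)" b "Test BOne"] assms by simp
  finally show "eqv_under st (atom_test \<alpha>) (Loop e b) (expD DAcc)" by simp
qed

lemma expands_at_Loop_iterate:
  assumes he: "expands_at st \<alpha> e" and "evalB b \<alpha>"
  shows "expands_at st \<alpha> (Loop e b)"
proof -
  let ?A = "Test (atom_test \<alpha>)" and ?lp = "Loop e b"
  define \<nu> where "\<nu> = deriv st e \<alpha>"
  define ds where "ds = filter (\<lambda>d. d \<noteq> DAcc) (enum_of (supp \<nu>))"
  have fin: "finite (supp \<nu>)" using he by (simp add: expands_at_def \<nu>_def)
  then have ds: "distinct ds" "set ds = supp \<nu> - {DAcc}"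
    using enum_of_finite[OF fin] by (auto simp: ds_def)
  let ?qs = "map (\<lambda>d. (\<nu> d, expD d)) ds" and ?qs' = "map (\<lambda>d. (\<nu> d, expD (dres_seq ?lp d))) ds"
  have "eqv st (Seq ?A e) (Seq ?A (ws (expansion_terms \<nu>)))"
    using he by (simp add: expands_at_def \<nu>_def)
  also have "eqv st \<dots> (Seq ?A (Prob (Test BOne) (\<nu> DAcc) 1 (ws ?qs)))"
  proof -
    have "filter (\<lambda>q. snd q \<noteq> expD DAcc) (expansion_terms \<nu>) = ?qs"
      by (simp del: expD.simps add: expansion_terms_def ds_def filter_map o_def)
    with ws_pull[of st "expansion_terms \<nu>" "expD DAcc"] show ?thesis
      using wt_expansion_terms[OF fin, of DAcc] by (simp add: eqv_under_cong)
  qed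
  also have "eqv st \<dots> (Seq ?A (Prob (ws ?qs) 1 (\<nu> DAcc) (Test BOne)))" by (rule eqv_under_cong, rule eqv.W2)
  finally have "eqv st (Seq ?A ?lp) (Seq ?A (Seq (odot (st (\<nu> DAcc))) (Seq (ws ?qs) ?lp)))"
    by (rule eqv_under_Loop) (use \<open>evalB b \<alpha>\<close> in \<open>auto simp: beq_def evalB_atom_test\<close>)
  also have "eqv st \<dots> (Seq ?A (Seq (odot (st (\<nu> DAcc))) (ws ?qs')))"
    using ws_Seq_expD[where ds = ds and \<nu> = \<nu> and f = ?lp] ds
    by (intro eqv_under_cong eqv.cong_seq[OF eqv.refl]) simp
  also have "eqv st \<dots> (Seq ?A (ws (scale (st (\<nu> DAcc)) ?qs')))"
    by (rule eqv_under_cong, rule ws_scale)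
  finally have unfolded: "eqv_under st (atom_test \<alpha>) ?lp (ws (scale (st (\<nu> DAcc)) ?qs'))" .
  have weights: "deriv st ?lp \<alpha> y = wt (scale (st (\<nu> DAcc)) ?qs') (expD y)" for y
  proof -
    have "deriv st ?lp \<alpha> y = st (\<nu> DAcc) * (\<Sum>d\<in>supp \<nu> - {DAcc}. \<nu> d * delta (dres_seq ?lp d) y)"
      unfolding \<nu>_def by (rule deriv_Loop_true[OF fin[unfolded \<nu>_def] \<open>evalB b \<alpha>\<close>])
    then show ?thesis by (simp add: wt_map_expD_delta sum_list_distinct_conv_sum_set ds)
  qed
  show ?thesis by (rule expands_atI[OF weights _ unfolded]) (auto simp: scale_def)
qed

lemma expands_at: "expands_at st \<alpha> e"
  by (induction e)
    (auto intro: expands_at_Act expands_at_Test expands_at_Guard expands_at_Seq expands_at_Ret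
      expands_at_Prob expands_at_Loop_exit expands_at_Loop_iterate)

end

theorem mainTheorem8:
  fixes st :: "'s::{semiring_0,monoid_mult} \<Rightarrow> 's"
    and e :: "('t::finite, 'p, 'v, 's) exp"
  assumes "positive_sr TYPE('s)"
    and "refinement_sr TYPE('s)"
    and "conway st"
  shows "eqv st e
           (GS UNIV (\<lambda>\<alpha>. WS (supp (deriv st e \<alpha>)) (deriv st e \<alpha>) expD))"
  using expands_at[of st _ e] by (intro eqv_GS_UNIV) (simp add: expands_at_def WS_supp_expD)

end
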